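(* Let $X$ be a compact metric space and $f\colon X\to X$ a homeomorphism with the pseudo-orbit tracing property. If $f$ has a positively expansive measure, then $f$ has positive topological entropy.
   Context: Given $\delta\ge 0$, a bi-infinite sequence $(x_i)_{i\in\mathbb{Z}}$ in $X$ is a $\delta$-pseudo-orbit of $f$ if $d(f(x_i),x_{i+1})\le\delta$ for all $i\in\mathbb{Z}$; it is $\epsilon$-shadowed if there is $x\in X$ with $d(f^i(x),x_i)\le\epsilon$ for all $i\in\mathbb{Z}$. $f$ has the pseudo-orbit tracing property (POTP) if for every $\epsilon>0$ there is $\delta>0$ such that every $\delta$-pseudo-orbit can be $\epsilon$-shadowed. For $x\in X$ and $\delta\ge0$ let $\Phi_\delta(x)=\{y\in X: d(f^i(x),f^i(y))\le\delta \text{ for all } i\in\mathbb{N}=\{0,1,2,\dots\}\}$. A (not necessarily invariant) Borel probability measure $\mu$ on $X$ is positively expansive if there is $e>0$ (an expansivity constant) such that $\mu(\Phi_e(x))=0$ for every $x\in X$. *)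

theory Defs
  imports "HOL-Probability.Probability"
begin

definition zpow :: "('a \<Rightarrow> 'a) \<Rightarrow> int \<Rightarrow> 'a \<Rightarrow> 'a" where
  "zpow f i x = (if 0 \<le> i then (f ^^ nat i) x else (inv f ^^ nat (- i)) x)"

definition pseudo_orbit :: "('a::metric_space \<Rightarrow> 'a) \<Rightarrow> real \<Rightarrow> (int \<Rightarrow> 'a) \<Rightarrow> bool" where
  "pseudo_orbit f \<delta> xs \<longleftrightarrow> (\<forall>i. dist (f (xs i)) (xs (i + 1)) \<le> \<delta>)"

definition shadowed :: "('a::metric_space \<Rightarrow> 'a) \<Rightarrow> real \<Rightarrow> (int \<Rightarrow> 'a) \<Rightarrow> bool" where
  "shadowed f \<epsilon> xs \<longleftrightarrow> (\<exists>x. \<forall>i. dist (zpow f i x) (xs i) \<le> \<epsilon>)"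

definition POTP :: "('a::metric_space \<Rightarrow> 'a) \<Rightarrow> bool" where
  "POTP f \<longleftrightarrow> (\<forall>\<epsilon>>0. \<exists>\<delta>>0. \<forall>xs. pseudo_orbit f \<delta> xs \<longrightarrow> shadowed f \<epsilon> xs)"

definition Phi :: "('a::metric_space \<Rightarrow> 'a) \<Rightarrow> real \<Rightarrow> 'a \<Rightarrow> 'a set" where
  "Phi f \<delta> x = {y. \<forall>i::nat. dist ((f ^^ i) x) ((f ^^ i) y) \<le> \<delta>}"

definition pos_expansive_measure :: "('a::metric_space \<Rightarrow> 'a) \<Rightarrow> 'a measure \<Rightarrow> bool" where
  "pos_expansive_measure f M \<longleftrightarrow>
     prob_space M \<and> sets M = sets borel \<and>
     (\<exists>e>0. \<forall>x. measure M (Phi f e x) = 0)"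

definition separated :: "('a::metric_space \<Rightarrow> 'a) \<Rightarrow> nat \<Rightarrow> real \<Rightarrow> 'a set \<Rightarrow> bool" where
  "separated f n \<epsilon> S \<longleftrightarrow>
     (\<forall>x\<in>S. \<forall>y\<in>S. x \<noteq> y \<longrightarrow> (\<exists>i<n. dist ((f ^^ i) x) ((f ^^ i) y) > \<epsilon>))"

definition topological_entropy :: "('a::metric_space \<Rightarrow> 'a) \<Rightarrow> ereal" where
  "topological_entropy f =
     (SUP \<epsilon>\<in>{0<..}. limsup (\<lambda>n.
        SUP S\<in>{S. finite S \<and> S \<noteq> {} \<and> separated f (Suc n) \<epsilon> S}.
          ereal (ln (real (card S)) / real (Suc n))))"

end

theory Submission
  imports Defs
begin

text \<open>
  Fix \<open>\<epsilon>\<close> a quarter of an expansivity constant and \<open>\<delta>\<close> the matching shadowing constant.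
  If two periodic \<open>\<delta>\<close>-pseudo-orbits of a common period start at the same point but are
  \<open>3\<epsilon>\<close>-apart somewhere, then concatenating them along arbitrary 0/1-words and shadowing
  yields \<open>2\<^sup>k\<close> points that are \<open>\<epsilon>\<close>-separated up to time \<open>kL\<close>, so the entropy is at
  least \<open>ln 2 / L\<close>. Otherwise, code every orbit by a \<open>\<delta>\<close>-pseudo-orbit in a finite net and
  cut it at a recurrent symbol: two orbits whose codes agree up to that symbol can be
  glued into two periodic pseudo-orbits with a common start, so they stay
  close forever. Hence the space is a countable union of sets \<open>\<Phi>\<^sub>e(x)\<close>, which is
  impossible for a positively expansive probability measure.
\<close>

definition periodic_pseudo_orbit :: "('a::metric_space \<Rightarrow> 'a) \<Rightarrow> real \<Rightarrow> nat \<Rightarrow> (nat \<Rightarrow> 'a) \<Rightarrow> bool"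
  where "periodic_pseudo_orbit f \<delta> L \<alpha> \<longleftrightarrow> (\<forall>i<L. dist (f (\<alpha> i)) (\<alpha> (Suc i mod L)) \<le> \<delta>)"

lemma periodic_pseudo_orbit_append:
  assumes u: "\<And>n. dist (f (u n)) (u (Suc n)) \<le> \<delta>" and v: "\<And>n. dist (f (v n)) (v (Suc n)) \<le> \<delta>"
    and L1: "L1 > 0" and L2: "L2 > 0" and uv: "u L1 = v 0" and vu: "v L2 = u 0"
  shows "periodic_pseudo_orbit f \<delta> (L1 + L2) (\<lambda>i. if i < L1 then u i else v (i - L1))"
  unfolding periodic_pseudo_orbit_def
proof (intro allI impI)
  fix i assume i: "i < L1 + L2"
  consider "Suc i < L1" | "Suc i = L1" | "L1 < Suc i" "Suc i < L1 + L2" | "Suc i = L1 + L2"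
    using i by linarith
  then show "dist (f (if i < L1 then u i else v (i - L1)))
      (if Suc i mod (L1 + L2) < L1 then u (Suc i mod (L1 + L2)) else v (Suc i mod (L1 + L2) - L1)) \<le> \<delta>"
  proof cases
    case 1
    then show ?thesis using u[of i] by simp
  next
    case 2
    then show ?thesis using u[of i] uv L2 by simp
  next
    case 3
    then have "Suc i - L1 = Suc (i - L1)" by linarith
    then show ?thesis using 3 v[of "i - L1"] by simp
  next
    case 4
    then have "Suc (i - L1) = L2" using L2 by linarith
    then show ?thesis using 4 v[of "i - L1"] vu L1 by simp
  qed
qed

lemma div_mod_mult_add_int:
  fixes q r L :: int
  assumes "0 \<le> r" "r < L"
  shows "(q * L + r) div L = q" "(q * L + r) mod L = r"
  using assms by (simp_all add: div_add1_eq[of "q * L" r L])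

lemma pseudo_orbit_concat_periodic:
  fixes \<gamma> :: "int \<Rightarrow> nat \<Rightarrow> 'a::metric_space"
  assumes L: "L > 0" and per: "\<And>q. periodic_pseudo_orbit f \<delta> L (\<gamma> q)" and base: "\<And>q. \<gamma> q 0 = b"
  shows "pseudo_orbit f \<delta> (\<lambda>i. \<gamma> (i div int L) (nat (i mod int L)))"
  unfolding pseudo_orbit_def
proof
  fix i :: int
  define q r where "q = i div int L" and "r = i mod int L"
  have r: "0 \<le> r" "r < int L" and i: "i + 1 = q * int L + (r + 1)"
    using L by (auto simp: q_def r_def)
  have step: "dist (f (\<gamma> q (nat r))) (\<gamma> q (Suc (nat r) mod L)) \<le> \<delta>"
    using per[of q] r unfolding periodic_pseudo_orbit_def by (simp add: nat_less_iff)
  show "dist (f (\<gamma> (i div int L) (nat (i mod int L))))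
      (\<gamma> ((i + 1) div int L) (nat ((i + 1) mod int L))) \<le> \<delta>"
  proof (cases "r + 1 < int L")
    case True
    then have "(i + 1) div int L = q" "(i + 1) mod int L = r + 1"
      using div_mod_mult_add_int[of "r + 1" "int L" q] r unfolding i by auto
    moreover have "Suc (nat r) mod L = nat (r + 1)" using True r by (simp add: nat_less_iff)
    ultimately show ?thesis using step by (simp add: q_def r_def)
  next
    case False
    then have "i + 1 = (q + 1) * int L + 0" using r i by (simp add: algebra_simps)
    then have "(i + 1) div int L = q + 1" "(i + 1) mod int L = 0"
      using div_mod_mult_add_int[of 0 "int L" "q + 1"] L by auto
    moreover have "Suc (nat r) = L" using False r by linarith
    ultimately show ?thesis using step base[of q] base[of "q + 1"] by (simp add: q_def r_def)
  qed
qed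

lemma separated_set_of_diverging_periodic_pseudo_orbits:
  fixes f :: "'a::metric_space \<Rightarrow> 'a"
  assumes shad: "\<And>xs. pseudo_orbit f \<delta> xs \<Longrightarrow> shadowed f \<epsilon> xs"
    and L: "L > 0" and \<alpha>: "periodic_pseudo_orbit f \<delta> L \<alpha>" and \<beta>: "periodic_pseudo_orbit f \<delta> L \<beta>"
    and base: "\<alpha> 0 = \<beta> 0" and j: "j < L" and far: "3 * \<epsilon> < dist (\<alpha> j) (\<beta> j)"
  shows "\<exists>S. finite S \<and> card S = 2 ^ k \<and> separated f (k * L) \<epsilon> S"
proof -
  define block where "block A q = (if 0 \<le> q \<and> nat q \<in> A then \<beta> else \<alpha>)"
    for A :: "nat set" and q :: int
  define z where "z A i = block A (i div int L) (nat (i mod int L))" for A i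
  have "pseudo_orbit f \<delta> (z A)" for A
    unfolding z_def using \<alpha> \<beta> base by (intro pseudo_orbit_concat_periodic[OF L]) (auto simp: block_def)
  then have "\<forall>A. \<exists>x. \<forall>i. dist (zpow f i x) (z A i) \<le> \<epsilon>"
    using shad unfolding shadowed_def by blast
  then obtain x where "\<And>A i. dist (zpow f i (x A)) (z A i) \<le> \<epsilon>" by metis
  then have shadow: "dist ((f ^^ n) (x A)) (z A (int n)) \<le> \<epsilon>" for A n
    by (metis zpow_def nat_int of_nat_0_le_iff)
  have "0 \<le> \<epsilon>" using order_trans[OF zero_le_dist shadow] .
  have z_block: "z A (int (r * L + i)) = (if r \<in> A then \<beta> else \<alpha>) i" if "i < L" for A r i
    using that div_mod_mult_add_int[of "int i" "int L" "int r"]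
    by (simp add: z_def block_def algebra_simps)
  have sep: "\<exists>n<k * L. \<epsilon> < dist ((f ^^ n) (x A)) ((f ^^ n) (x A'))"
    if "A \<subseteq> {..<k}" "A' \<subseteq> {..<k}" "A \<noteq> A'" for A A'
  proof -
    have "\<exists>r<k. r \<in> A \<longleftrightarrow> r \<notin> A'" using that by auto
    then obtain r where r: "r < k" "r \<in> A \<longleftrightarrow> r \<notin> A'" by blast
    define n where "n = r * L + j"
    have "n < Suc r * L" using j by (simp add: n_def)
    also have "\<dots> \<le> k * L" using r(1) by (intro mult_right_mono) auto
    finally have "n < k * L" .
    have "3 * \<epsilon> < dist (z A (int n)) (z A' (int n))"
      using z_block[OF j] r(2) far unfolding n_def by (cases "r \<in> A") (auto simp: dist_commute)
    also have "\<dots> \<le> dist ((f ^^ n) (x A)) (z A (int n)) + dist ((f ^^ n) (x A)) ((f ^^ n) (x A'))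
        + dist ((f ^^ n) (x A')) (z A' (int n))"
      using dist_triangle[of "z A (int n)" "z A' (int n)" "(f ^^ n) (x A)"]
        dist_triangle[of "(f ^^ n) (x A)" "z A' (int n)" "(f ^^ n) (x A')"]
        dist_commute[of "z A (int n)" "(f ^^ n) (x A)"]
      by linarith
    finally have "\<epsilon> < dist ((f ^^ n) (x A)) ((f ^^ n) (x A'))"
      using shadow[of n A] shadow[of n A'] by linarith
    with \<open>n < k * L\<close> show ?thesis by blast
  qed
  have inj: "inj_on x (Pow {..<k})"
  proof (rule inj_onI, rule ccontr)
    fix A A' assume "A \<in> Pow {..<k}" "A' \<in> Pow {..<k}" "x A = x A'" "A \<noteq> A'"
    then obtain n where "\<epsilon> < dist ((f ^^ n) (x A)) ((f ^^ n) (x A'))" using sep by blast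
    with \<open>x A = x A'\<close> \<open>0 \<le> \<epsilon>\<close> show False by simp
  qed
  have "separated f (k * L) \<epsilon> (x ` Pow {..<k})"
    unfolding separated_def
  proof (intro ballI impI)
    fix y y' assume "y \<in> x ` Pow {..<k}" "y' \<in> x ` Pow {..<k}" "y \<noteq> y'"
    then obtain A A' where "A \<subseteq> {..<k}" "A' \<subseteq> {..<k}" "y = x A" "y' = x A'" "A \<noteq> A'" by blast
    then show "\<exists>n<k * L. \<epsilon> < dist ((f ^^ n) y) ((f ^^ n) y')" using sep by blast
  qed
  moreover have "card (x ` Pow {..<k}) = 2 ^ k"
    using card_image[OF inj] by (simp add: card_Pow)
  ultimately show ?thesis by (intro exI[of _ "x ` Pow {..<k}"]) simp
qed

lemma topological_entropy_ge_of_separated_sets: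
  fixes f :: "'a::metric_space \<Rightarrow> 'a"
  assumes "\<epsilon> > 0" "L > 0" and sep: "\<And>k. \<exists>S. finite S \<and> card S = 2 ^ k \<and> separated f (k * L) \<epsilon> S"
  shows "ereal (ln 2 / real L) \<le> topological_entropy f"
proof -
  define h where "h n = (SUP S\<in>{S. finite S \<and> S \<noteq> {} \<and> separated f (Suc n) \<epsilon> S}.
      ereal (ln (real (card S)) / real (Suc n)))" for n
  have h_ge: "ereal (ln 2 / real L) \<le> h (k * L - 1)" if "k > 0" for k
  proof -
    have kL: "Suc (k * L - 1) = k * L" using that \<open>L > 0\<close> by simp
    obtain S where S: "finite S" "card S = 2 ^ k" "separated f (k * L) \<epsilon> S" using sep by blast
    then have S_mem: "S \<in> {S. finite S \<and> S \<noteq> {} \<and> separated f (Suc (k * L - 1)) \<epsilon> S}"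
      unfolding kL by auto
    have entropy_S: "ln (real (card S)) / real (Suc (k * L - 1)) = ln 2 / real L"
      unfolding S(2) kL using that \<open>L > 0\<close> by (simp add: ln_realpow)
    show ?thesis unfolding h_def by (rule SUP_upper2[OF S_mem]) (simp only: entropy_S order_refl)
  qed
  have "ereal (ln 2 / real L) \<le> limsup h"
    unfolding limsup_INF_SUP
  proof (rule INF_greatest)
    fix N
    have "N \<le> Suc N * L - 1" using \<open>L > 0\<close> by (cases L) auto
    then have "h (Suc N * L - 1) \<le> \<Squnion> (h ` {N..})" by (intro SUP_upper) auto
    then show "ereal (ln 2 / real L) \<le> \<Squnion> (h ` {N..})" using h_ge[of "Suc N"] by auto
  qed
  also have "\<dots> \<le> topological_entropy f"
    unfolding topological_entropy_def h_def using \<open>\<epsilon> > 0\<close> by (intro SUP_upper[of \<epsilon> "{0<..}"]) auto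
  finally show ?thesis .
qed

lemma continuous_on_funpow:
  fixes f :: "'a::topological_space \<Rightarrow> 'a"
  assumes "continuous_on UNIV f"
  shows "continuous_on UNIV (f ^^ n)"
proof (induction n)
  case 0
  show ?case by (simp add: id_def)
next
  case (Suc n)
  then have "continuous_on UNIV (\<lambda>x. f ((f ^^ n) x))"
    using assms by (intro continuous_on_compose2[of UNIV f UNIV "f ^^ n"]) auto
  then show ?case by (simp add: o_def)
qed

lemma closed_Phi:
  assumes "continuous_on UNIV f"
  shows "closed (Phi f e x)"
proof -
  have "Phi f e x = (\<Inter>i. {y. dist ((f ^^ i) x) ((f ^^ i) y) \<le> e})" by (auto simp: Phi_def)
  moreover have "closed {y. dist ((f ^^ i) x) ((f ^^ i) y) \<le> e}" for i
    by (intro closed_Collect_le continuous_on_dist continuous_on_const continuous_on_funpow assms)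
  ultimately show ?thesis by (simp add: closed_INT)
qed

lemma not_countable_Phi_cover:
  fixes f :: "'a::metric_space \<Rightarrow> 'a"
  assumes "continuous_on UNIV f" "prob_space M" and sets_M: "sets M = sets borel"
    and null: "\<And>x. measure M (Phi f e x) = 0" and "countable C"
  shows "\<not> UNIV \<subseteq> (\<Union>x\<in>C. Phi f e x)"
proof
  interpret prob_space M by fact
  have space_M: "space M = UNIV" using sets_eq_imp_space_eq[OF sets_M] by simp
  have "Phi f e x \<in> null_sets M" for x
  proof -
    have "Phi f e x \<in> sets M" using borel_closed[OF closed_Phi[OF assms(1)]] sets_M by simp
    then show ?thesis using null[of x] by (intro null_setsI) (simp_all add: emeasure_eq_measure)
  qed
  then have "(\<Union>x\<in>C. Phi f e x) \<in> null_sets M" using \<open>countable C\<close> by (intro null_sets_UN') auto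
  moreover assume "UNIV \<subseteq> (\<Union>x\<in>C. Phi f e x)"
  ultimately have "space M \<in> null_sets M" by (metis null_sets_subset sets.top space_M)
  then show False using emeasure_space_1 by (simp add: null_sets_def)
qed

lemma pseudo_orbit_coding:
  fixes f :: "'a::metric_space \<Rightarrow> 'a"
  assumes compact: "compact (UNIV :: 'a set)" and "continuous_on UNIV f" and "\<delta> > 0" "\<eta> > 0"
  obtains P :: "'a set" and code :: "'a \<Rightarrow> nat \<Rightarrow> 'a"
  where "finite P" "\<And>x n. code x n \<in> P" "\<And>x n. dist ((f ^^ n) x) (code x n) < \<eta>"
    "\<And>x n. dist (f (code x n)) (code x (Suc n)) \<le> \<delta>"
proof -
  have "uniformly_continuous_on UNIV f"
    using compact_uniformly_continuous[OF _ compact] \<open>continuous_on UNIV f\<close> .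
  from this[unfolded uniformly_continuous_on_def, rule_format, of "\<delta> / 2"]
  obtain \<rho> where "\<rho> > 0" and \<rho>: "\<And>x y. dist y x < \<rho> \<Longrightarrow> dist (f y) (f x) < \<delta> / 2"
    using \<open>\<delta> > 0\<close> by auto
  define r where "r = min \<eta> (min \<rho> (\<delta> / 2))"
  have "r > 0" using \<open>\<rho> > 0\<close> assms by (simp add: r_def)
  obtain P :: "'a set" where "finite P" and P: "UNIV \<subseteq> (\<Union>p\<in>P. ball p r)"
  proof -
    have "UNIV \<subseteq> (\<Union>x. ball x r)" using \<open>r > 0\<close> by auto
    then show ?thesis using compactE_image[OF compact, of UNIV "\<lambda>x. ball x r"] that by blast
  qed
  define code where "code x n = (SOME p. p \<in> P \<and> dist ((f ^^ n) x) p < r)" for x n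
  have near: "\<exists>p. p \<in> P \<and> dist y p < r" for y
    using P by (force simp: dist_commute)
  have code: "code x n \<in> P \<and> dist ((f ^^ n) x) (code x n) < r" for x n
    unfolding code_def by (rule someI_ex[OF near])
  have "dist (f (code x n)) (code x (Suc n)) \<le> \<delta>" for x n
  proof -
    have "dist (f (code x n)) (f ((f ^^ n) x)) < \<delta> / 2"
      using code[of x n] by (intro \<rho>) (simp add: r_def dist_commute)
    moreover have "dist ((f ^^ Suc n) x) (code x (Suc n)) < \<delta> / 2"
      using code[of x "Suc n"] by (simp add: r_def)
    ultimately show ?thesis
      using dist_triangle[of "f (code x n)" "code x (Suc n)" "(f ^^ Suc n) x"] by simp
  qed
  moreover have "dist ((f ^^ n) x) (code x n) < \<eta>" for x n
    using code[of x n] by (simp add: r_def)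
  ultimately show ?thesis using that[OF \<open>finite P\<close>] code by blast
qed

lemma finite_range_recurrent:
  fixes a :: "nat \<Rightarrow> 'b"
  assumes "finite (range a)"
  obtains T where "\<And>n. \<exists>m>n. a m = a T"
proof -
  obtain y where "y \<in> range a" and "infinite (a -` {y})"
    using inf_img_fin_dom[OF assms infinite_UNIV_nat] by blast
  then obtain T where "infinite {m. a m = a T}" by (auto simp: vimage_def)
  then show ?thesis using that unfolding infinite_nat_iff_unbounded by blast
qed

definition periodic_pseudo_orbits_close :: "('a::metric_space \<Rightarrow> 'a) \<Rightarrow> real \<Rightarrow> real \<Rightarrow> bool"
  where "periodic_pseudo_orbits_close f \<delta> c \<longleftrightarrow>
    (\<forall>L \<alpha> \<beta> j. 0 < L \<and> periodic_pseudo_orbit f \<delta> L \<alpha> \<and> periodic_pseudo_orbit f \<delta> L \<beta> \<and>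
      \<alpha> 0 = \<beta> 0 \<and> j < L \<longrightarrow> dist (\<alpha> j) (\<beta> j) \<le> c)"

lemma periodic_pseudo_orbits_closeD:
  assumes "periodic_pseudo_orbits_close f \<delta> c" "0 < L" "periodic_pseudo_orbit f \<delta> L \<alpha>"
    "periodic_pseudo_orbit f \<delta> L \<beta>" "\<alpha> 0 = \<beta> 0" "j < L"
  shows "dist (\<alpha> j) (\<beta> j) \<le> c"
  using assms unfolding periodic_pseudo_orbits_close_def by blast

lemma dist_le_of_common_returns:
  fixes f :: "'a::metric_space \<Rightarrow> 'a"
  assumes close: "periodic_pseudo_orbits_close f \<delta> c"
    and u: "\<And>n. dist (f (u n)) (u (Suc n)) \<le> \<delta>" and v: "\<And>n. dist (f (v n)) (v (Suc n)) \<le> \<delta>"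
    and uv: "u 0 = v 0" and ru: "n < Lu" "u Lu = u 0" and rv: "n < Lv" "v Lv = v 0"
  shows "dist (u n) (v n) \<le> c"
proof -
  have uv_loop: "periodic_pseudo_orbit f \<delta> (Lu + Lv) (\<lambda>i. if i < Lu then u i else v (i - Lu))"
    by (rule periodic_pseudo_orbit_append[where u = u and v = v]) (use u v uv ru rv in auto)
  have "periodic_pseudo_orbit f \<delta> (Lv + Lu) (\<lambda>i. if i < Lv then v i else u (i - Lv))"
    by (rule periodic_pseudo_orbit_append[where u = v and v = u]) (use u v uv ru rv in auto)
  then have vu_loop: "periodic_pseudo_orbit f \<delta> (Lu + Lv) (\<lambda>i. if i < Lv then v i else u (i - Lv))"
    by (simp add: add.commute)
  have "dist (if n < Lu then u n else v (n - Lu)) (if n < Lv then v n else u (n - Lv)) \<le> c"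
    by (rule periodic_pseudo_orbits_closeD[OF close _ uv_loop vu_loop]) (use uv ru rv in auto)
  then show ?thesis using ru rv by simp
qed

lemma dist_le_of_common_recurrent_prefix:
  fixes f :: "'a::metric_space \<Rightarrow> 'a"
  assumes close: "periodic_pseudo_orbits_close f \<delta> c" and "0 \<le> c"
    and u: "\<And>n. dist (f (u n)) (u (Suc n)) \<le> \<delta>" and v: "\<And>n. dist (f (v n)) (v (Suc n)) \<le> \<delta>"
    and prefix: "\<And>m. m \<le> T \<Longrightarrow> u m = v m"
    and ru: "\<And>n. \<exists>m>n. u m = u T" and rv: "\<And>n. \<exists>m>n. v m = v T"
  shows "dist (u n) (v n) \<le> c"
proof (cases "n < T")
  case True
  then show ?thesis using prefix \<open>0 \<le> c\<close> by simp
next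
  case False
  obtain mu where "mu > n" "u mu = u T" using ru by blast
  obtain mv where "mv > n" "v mv = v T" using rv by blast
  have "dist (u (T + (n - T))) (v (T + (n - T))) \<le> c"
    using False \<open>mu > n\<close> \<open>mv > n\<close> \<open>u mu = u T\<close> \<open>v mv = v T\<close>
    by (intro dist_le_of_common_returns[OF close, where Lu = "mu - T" and Lv = "mv - T"])
      (auto simp: u v prefix)
  then show ?thesis using False by simp
qed

lemma mem_Phi_of_close_approximations:
  fixes f :: "'a::metric_space \<Rightarrow> 'a"
  assumes "\<And>n. dist ((f ^^ n) x) (a n) < \<eta>" "\<And>n. dist ((f ^^ n) y) (b n) < \<eta>"
    and "\<And>n. dist (a n) (b n) \<le> c"
  shows "y \<in> Phi f (c + 2 * \<eta>) x"
  unfolding Phi_def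
proof (intro CollectI allI)
  fix n
  have "dist ((f ^^ n) x) ((f ^^ n) y) \<le> dist ((f ^^ n) x) (a n) + dist (a n) (b n) + dist ((f ^^ n) y) (b n)"
    using dist_triangle[of "(f ^^ n) x" "(f ^^ n) y" "a n"]
      dist_triangle[of "a n" "(f ^^ n) y" "b n"] dist_commute[of "b n" "(f ^^ n) y"]
    by linarith
  then show "dist ((f ^^ n) x) ((f ^^ n) y) \<le> c + 2 * \<eta>"
    using assms[of n] by linarith
qed

lemma countable_Phi_cover:
  fixes f :: "'a::metric_space \<Rightarrow> 'a"
  assumes compact: "compact (UNIV :: 'a set)" and contf: "continuous_on UNIV f" and "\<delta> > 0"
    and close: "periodic_pseudo_orbits_close f \<delta> c"
    and "0 \<le> c" "c < e"
  shows "\<exists>C. countable C \<and> UNIV \<subseteq> (\<Union>x\<in>C. Phi f e x)"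
proof -
  define \<eta> where "\<eta> = (e - c) / 2"
  have "\<eta> > 0" using \<open>c < e\<close> by (simp add: \<eta>_def)
  obtain P code where "finite P" and code_P: "\<And>x n. code x n \<in> P"
    and code_near: "\<And>x n. dist ((f ^^ n) x) (code x n) < \<eta>"
    and code_chain: "\<And>x n. dist (f (code x n)) (code x (Suc n)) \<le> \<delta>"
    using pseudo_orbit_coding[OF compact contf \<open>\<delta> > 0\<close> \<open>\<eta> > 0\<close>] by blast
  have "finite (range (code x))" for x
    using code_P by (intro finite_subset[OF _ \<open>finite P\<close>]) auto
  then have "\<forall>x. \<exists>T. \<forall>n. \<exists>m>n. code x m = code x T"
    by (metis finite_range_recurrent)
  then obtain T where T: "\<And>x n. \<exists>m>n. code x m = code x (T x)"
    using choice[of "\<lambda>x T. \<forall>n. \<exists>m>n. code x m = code x T"] by blast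
  define key where "key x = map (code x) [0..<Suc (T x)]" for x
  have code_close: "dist (code x n) (code y n) \<le> c" if "key x = key y" for x y n
  proof -
    have TT: "T y = T x" using arg_cong[OF that, of length] by (simp add: key_def)
    have prefix: "code x m = code y m" if "m \<le> T x" for m
    proof -
      have "key x ! m = key y ! m" using \<open>key x = key y\<close> by simp
      then show ?thesis using that TT unfolding key_def by (simp del: upt_Suc add: less_Suc_eq_le)
    qed
    show ?thesis
      using T[of _ x] T[of _ y] TT prefix code_chain
      by (intro dist_le_of_common_recurrent_prefix[OF close \<open>0 \<le> c\<close>, where T = "T x"]) auto
  qed
  have "c + 2 * \<eta> = e" by (simp add: \<eta>_def field_simps)
  then have Phi_key: "y \<in> Phi f e x" if "key x = key y" for x y
    using mem_Phi_of_close_approximations[OF code_near code_near code_close[OF that]] by simp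
  define rep where "rep k = (SOME x. key x = k)" for k
  have "range key \<subseteq> lists P" using code_P by (auto simp: key_def)
  then have "countable (rep ` range key)"
    using countable_lists[OF countable_finite[OF \<open>finite P\<close>]] countable_subset by blast
  moreover have "UNIV \<subseteq> (\<Union>x\<in>rep ` range key. Phi f e x)"
  proof
    fix y
    have "key (rep (key y)) = key y" unfolding rep_def by (rule someI) (rule refl)
    then show "y \<in> (\<Union>x\<in>rep ` range key. Phi f e x)" using Phi_key by blast
  qed
  ultimately show ?thesis by blast
qed

theorem corollary1:
  fixes f :: "'a::metric_space \<Rightarrow> 'a"
  assumes "compact (UNIV :: 'a set)"
    and "\<exists>g. homeomorphism UNIV UNIV f g"
    and "POTP f"
    and "\<exists>M. pos_expansive_measure f M"
  shows "topological_entropy f > 0"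
proof -
  obtain g where "homeomorphism UNIV UNIV f g" using assms(2) by blast
  then have contf: "continuous_on UNIV f" by (simp add: homeomorphism_def)
  obtain M e where M: "prob_space M" "sets M = sets borel" and "e > 0"
    and null: "\<And>x. measure M (Phi f e x) = 0"
    using assms(4) unfolding pos_expansive_measure_def by blast
  define \<epsilon> where "\<epsilon> = e / 4"
  have "\<epsilon> > 0" using \<open>e > 0\<close> by (simp add: \<epsilon>_def)
  then obtain \<delta> where "\<delta> > 0" and shad: "\<And>xs. pseudo_orbit f \<delta> xs \<Longrightarrow> shadowed f \<epsilon> xs"
    using assms(3) unfolding POTP_def by blast
  show ?thesis
  proof (cases "periodic_pseudo_orbits_close f \<delta> (3 * \<epsilon>)")
    case True
    then obtain C where "countable C" "UNIV \<subseteq> (\<Union>x\<in>C. Phi f e x)"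
      using countable_Phi_cover[OF assms(1) contf \<open>\<delta> > 0\<close>, of "3 * \<epsilon>" e] \<open>\<epsilon> > 0\<close>
      by (auto simp: \<epsilon>_def)
    then show ?thesis using not_countable_Phi_cover[OF contf M null] by blast
  next
    case False
    then obtain L \<alpha> \<beta> j where "L > 0" and diverging: "periodic_pseudo_orbit f \<delta> L \<alpha>"
      "periodic_pseudo_orbit f \<delta> L \<beta>" "\<alpha> 0 = \<beta> 0" "j < L" "3 * \<epsilon> < dist (\<alpha> j) (\<beta> j)"
      unfolding periodic_pseudo_orbits_close_def by (auto simp: not_le)
    have "ereal (ln 2 / real L) \<le> topological_entropy f"
      using separated_set_of_diverging_periodic_pseudo_orbits[OF shad \<open>L > 0\<close> diverging]
      by (rule topological_entropy_ge_of_separated_sets[OF \<open>\<epsilon> > 0\<close> \<open>L > 0\<close>])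
    moreover have "0 < ereal (ln 2 / real L)" using \<open>L > 0\<close> by simp
    ultimately show ?thesis by (rule order.strict_trans2[rotated])
  qed
qed

end
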